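(* Assume the Setup (for a single $n$). Fix an even integer $r\ge0$. Let $\mathcal T\subset U$ and $o\in V$ be such that $\mathbb P^H(\mathcal T)>0$ and $B_{\mathcal T}(o,r)$ is a valid rooted tree $(T,o)$ with $|V(T)|<d$. Then the height of $T$ equals $r$ and $m(I(T),T)>0$.
   Context: Setup. $k\ge 1$ is an integer and $d$ a positive integer. $G=(V,U,E)$ is a finite simple bipartite graph with parts $V$ and $U$ and edge set $E$, which is $C_4$-free (any two distinct vertices have at most one common neighbour) and $(d,k+1)$-bi-regular (every $v\in V$ has degree $d$ and every $u\in U$ has degree $k+1$). $B$ is a signed adjacency matrix of $G$: the real $V\times U$ matrix with $B_{v,u}\in\{1,-1\}$ if $vu\in E$ and $B_{v,u}=0$ otherwise. $H\subset\mathbb R^U$ is the row space of $B$ and $P_H$ the orthogonal projection onto $H$. The determinantal measure $\mathbb P^H$ is the probability measure on subsets $\mathcal S\subset U$ of size $\operatorname{rank}B$ given by $\mathbb P^H(\mathcal S)=\det(P_H|_{\mathcal S})$, where $P_H|_{\mathcal S}$ is the principal submatrix indexed by $\mathcal S$. For $\mathcal S\subset U$, $G[\mathcal S]$ denotes the subgraph of $G$ induced by $\mathcal S\cup N_G(\mathcal S)$. For $v\in V$ and an integer $r\ge 0$, $B_{\mathcal S}(v,r)$ denotes the rooted ball of radius $r$ around $v$ in $G[\mathcal S]$ (rooted at $v$). Trees. For a finite rooted tree $(T,o)$, the height of a vertex is its distance from $o$ and the height of $T$ is the maximal height of a vertex. Vertices of even (odd) height are called even (odd); $V(T)$ and $U(T)$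 denote the sets of even and odd vertices. $(T,o)$ is valid if its height is even and every odd vertex has degree exactly $k+1$ in $T$. $I(T)\subset V(T)$ is the set of even vertices of height strictly smaller than the height of $T$. For $K\subset V(T)$, $m(K,T)$ is the number of matchings of $T$ in which every vertex of $K\cup U(T)$ is saturated. *)

theory Defs
  imports "HOL-Analysis.Analysis" "HOL-Combinatorics.Permutations"
begin

text \<open>Vectors in R^U are modelled as real^'u, with U the finite type 'u; matrices V x U
  as real^'u^'v (rows indexed by V).\<close>

definition row_space :: "real^'u^'v \<Rightarrow> (real^'u) set" where
  "row_space B = span (rows B)"

definition proj_matrix :: "(real^'u::finite) set \<Rightarrow> real^'u^'u" where
  "proj_matrix H = (THE P. \<forall>x. P *v x \<in> H \<and> (\<forall>h\<in>H. inner (x - P *v x) h = 0))"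

definition principal_det :: "real^'u^'u \<Rightarrow> 'u set \<Rightarrow> real" where
  "principal_det M S = (\<Sum>p\<in>{p. p permutes S}. of_int (sign p) * (\<Prod>i\<in>S. M $ i $ p i))"

definition det_measure :: "real^'u^'v \<Rightarrow> 'u set \<Rightarrow> real" where
  "det_measure B S = (if card S = rank B then principal_det (proj_matrix (row_space B)) S else 0)"

definition walk_in :: "'a set \<Rightarrow> ('a \<Rightarrow> 'a \<Rightarrow> bool) \<Rightarrow> 'a list \<Rightarrow> bool" where
  "walk_in W A xs \<longleftrightarrow> xs \<noteq> [] \<and> set xs \<subseteq> W \<and> (\<forall>i. Suc i < length xs \<longrightarrow> A (xs ! i) (xs ! Suc i))"

definition conn_within :: "'a set \<Rightarrow> ('a \<Rightarrow> 'a \<Rightarrow> bool) \<Rightarrow> nat \<Rightarrow> 'a \<Rightarrow> 'a \<Rightarrow> bool" where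
  "conn_within W A n x y \<longleftrightarrow> (\<exists>xs. walk_in W A xs \<and> hd xs = x \<and> last xs = y \<and> length xs = Suc n)"

definition gdist :: "'a set \<Rightarrow> ('a \<Rightarrow> 'a \<Rightarrow> bool) \<Rightarrow> 'a \<Rightarrow> 'a \<Rightarrow> nat" where
  "gdist W A x y = (LEAST n. conn_within W A n x y)"

definition connected_graph :: "'a set \<Rightarrow> ('a \<Rightarrow> 'a \<Rightarrow> bool) \<Rightarrow> bool" where
  "connected_graph W A \<longleftrightarrow> (\<forall>x\<in>W. \<forall>y\<in>W. \<exists>n. conn_within W A n x y)"

definition has_cycle :: "'a set \<Rightarrow> ('a \<Rightarrow> 'a \<Rightarrow> bool) \<Rightarrow> bool" where
  "has_cycle W A \<longleftrightarrow> (\<exists>xs. walk_in W A xs \<and> distinct xs \<and> length xs \<ge> 3 \<and> A (last xs) (hd xs))"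

definition is_tree :: "'a set \<Rightarrow> ('a \<Rightarrow> 'a \<Rightarrow> bool) \<Rightarrow> bool" where
  "is_tree W A \<longleftrightarrow> finite W \<and> W \<noteq> {} \<and> connected_graph W A \<and> \<not> has_cycle W A"

definition tree_height :: "'a set \<Rightarrow> ('a \<Rightarrow> 'a \<Rightarrow> bool) \<Rightarrow> 'a \<Rightarrow> nat" where
  "tree_height W  A rt = Max (gdist W  A rt ` W)"

definition even_vertices :: "'a set \<Rightarrow> ('a \<Rightarrow> 'a \<Rightarrow> bool) \<Rightarrow> 'a \<Rightarrow> 'a set" where
  "even_vertices W  A rt = {x\<in>W. even (gdist W  A rt x)}"

definition odd_vertices :: "'a set \<Rightarrow> ('a \<Rightarrow> 'a \<Rightarrow> bool) \<Rightarrow> 'a \<Rightarrow> 'a set" where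
  "odd_vertices W  A rt = {x\<in>W. odd (gdist W  A rt x)}"

definition degree_in :: "'a set \<Rightarrow> ('a \<Rightarrow> 'a \<Rightarrow> bool) \<Rightarrow> 'a \<Rightarrow> nat" where
  "degree_in W A x = card {y\<in>W. A x y}"

definition valid_tree :: "nat \<Rightarrow> 'a set \<Rightarrow> ('a \<Rightarrow> 'a \<Rightarrow> bool) \<Rightarrow> 'a \<Rightarrow> bool" where
  "valid_tree k W  A rt \<longleftrightarrow> is_tree W A \<and> rt \<in> W \<and> even (tree_height W A rt) \<and>
     (\<forall>x\<in>odd_vertices W A rt. degree_in W A x = k + 1)"

definition I_set :: "'a set \<Rightarrow> ('a \<Rightarrow> 'a \<Rightarrow> bool) \<Rightarrow> 'a \<Rightarrow> 'a set" where
  "I_set W  A rt = {x\<in>even_vertices W A rt. gdist W  A rt x < tree_height W A rt}"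

definition graph_edges :: "'a set \<Rightarrow> ('a \<Rightarrow> 'a \<Rightarrow> bool) \<Rightarrow> 'a set set" where
  "graph_edges W A = {{x, y} | x y. x \<in> W \<and> y \<in> W \<and> A x y}"

definition is_matching :: "'a set \<Rightarrow> ('a \<Rightarrow> 'a \<Rightarrow> bool) \<Rightarrow> 'a set set \<Rightarrow> bool" where
  "is_matching W A M \<longleftrightarrow> M \<subseteq> graph_edges W A \<and> (\<forall>e1\<in>M. \<forall>e2\<in>M. e1 \<noteq> e2 \<longrightarrow> e1 \<inter> e2 = {})"

text \<open>m(K,T): number of matchings of T saturating every vertex of K \<union> U(T).\<close>
definition m_count :: "'a set \<Rightarrow> 'a set \<Rightarrow> ('a \<Rightarrow> 'a \<Rightarrow> bool) \<Rightarrow> 'a \<Rightarrow> nat" where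
  "m_count K W  A rt = card {M. is_matching W A M \<and>
      (\<forall>x\<in>K \<union> odd_vertices W A rt. \<exists>e\<in>M. x \<in> e)}"

section \<open>The bipartite graph G = (V,U,E), with V = UNIV::'v, U = UNIV::'u\<close>

definition C4_free :: "('v \<Rightarrow> 'u \<Rightarrow> bool) \<Rightarrow> bool" where
  "C4_free E \<longleftrightarrow> (\<forall>v1 v2. v1 \<noteq> v2 \<longrightarrow> card {u. E v1 u \<and> E v2 u} \<le> 1) \<and>
                  (\<forall>u1 u2. u1 \<noteq> u2 \<longrightarrow> card {v. E v u1 \<and> E v u2} \<le> 1)"

definition biregular :: "nat \<Rightarrow> nat \<Rightarrow> ('v \<Rightarrow> 'u \<Rightarrow> bool) \<Rightarrow> bool" where
  "biregular a b E \<longleftrightarrow> (\<forall>v. card {u. E v u} = a) \<and> (\<forall>u. card {v. E v u} = b)"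

definition signed_adjacency :: "('v \<Rightarrow> 'u \<Rightarrow> bool) \<Rightarrow> real^'u^'v \<Rightarrow> bool" where
  "signed_adjacency E B \<longleftrightarrow> (\<forall>v u. (E v u \<longrightarrow> B $ v $ u \<in> {1, -1}) \<and> (\<not> E v u \<longrightarrow> B $ v $ u = 0))"

text \<open>Adjacency of G[S] (induced on S \<union> N_G(S)) on the disjoint union V + U.\<close>
fun adj_S :: "('v \<Rightarrow> 'u \<Rightarrow> bool) \<Rightarrow> 'u set \<Rightarrow> 'v + 'u \<Rightarrow> 'v + 'u \<Rightarrow> bool" where
  "adj_S E S (Inl v) (Inr u) \<longleftrightarrow> u \<in> S \<and> E v u"
| "adj_S E S (Inr u) (Inl v) \<longleftrightarrow> u \<in> S \<and> E v u"
| "adj_S E S _ _ \<longleftrightarrow> False"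

text \<open>Vertex set of the ball B_S(v,r) in G[S]; the ball is the induced subgraph on it,
  i.e. the graph (ball_vertices E S v r, adj_S E S), rooted at Inl v.\<close>
definition ball_vertices :: "('v \<Rightarrow> 'u \<Rightarrow> bool) \<Rightarrow> 'u set \<Rightarrow> 'v \<Rightarrow> nat \<Rightarrow> ('v + 'u) set" where
  "ball_vertices E S v r = {x. \<exists>n\<le>r. conn_within UNIV (adj_S E S) n (Inl v) x}"

end

(*
  Since det(P_H restricted to T) > 0, the columns of B indexed by T are independent and span
  the column space of B. In a C4-free graph each of fewer than d vertices of V has a neighbour
  shared with none of the others, so the rows of B indexed by V(T) are independent. Restrict
  the rows to the columns U(T): for the even vertices whose whole neighbourhood in G[T] lies in
  the ball the restricted rows stay independent, since a vanishing combination would be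
  orthogonal to every column indexed by T. All restricted rows of V(T) span a space of
  dimension |U(T)|, while the tree gives |U(T)| < |V(T)| (every odd vertex has a child of its
  own, and the root is nobody's child). If the height were below r, every vertex of V(T) would
  qualify, forcing |V(T)| <= |U(T)|. So the height is r, the qualifying vertices contain I(T),
  and extending their rows to a basis and picking a nonvanishing term of the Leibniz expansion
  of the resulting square matrix yields a matching saturating I(T) and U(T).
*)

theory Submission
  imports Defs
begin

section \<open>Linear algebra\<close>

definition independent_family :: "('i \<Rightarrow> 'a::real_vector) \<Rightarrow> 'i set \<Rightarrow> bool" where
  "independent_family f I \<longleftrightarrow> (\<forall>c. (\<Sum>i\<in>I. c i *\<^sub>R f i) = 0 \<longrightarrow> (\<forall>i\<in>I. c i = 0))"

lemma independent_familyD: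
  "independent_family f I \<Longrightarrow> (\<Sum>i\<in>I. c i *\<^sub>R f i) = 0 \<Longrightarrow> i \<in> I \<Longrightarrow> c i = 0"
  unfolding independent_family_def by blast

lemma independent_family_iff:
  assumes "finite I"
  shows "independent_family f I \<longleftrightarrow> inj_on f I \<and> independent (f ` I)"
proof
  assume ind: "independent_family f I"
  show "inj_on f I \<and> independent (f ` I)"
  proof
    show inj: "inj_on f I"
    proof (rule inj_onI, rule ccontr)
      fix i j assume ij: "i \<in> I" "j \<in> I" "f i = f j" "i \<noteq> j"
      define c where "c l = (if l = i then 1 else if l = j then -1 else 0 :: real)" for l
      have "(\<Sum>l\<in>I. c l *\<^sub>R f l) = (\<Sum>l\<in>{i, j}. c l *\<^sub>R f l)"
        using ij assms by (intro sum.mono_neutral_right) (auto simp: c_def)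
      also have "\<dots> = 0" using ij by (simp add: c_def)
      finally have "c i = 0" by (rule independent_familyD[OF ind _ ij(1)])
      then show False by (simp add: c_def)
    qed
    show "independent (f ` I)"
    proof (rule independent_if_scalars_zero)
      fix c y assume sum0: "(\<Sum>y\<in>f ` I. c y *\<^sub>R y) = 0" and "y \<in> f ` I"
      then obtain i where i: "i \<in> I" "y = f i" by blast
      have "(\<Sum>i\<in>I. c (f i) *\<^sub>R f i) = 0"
        using sum0 by (simp add: sum.reindex[OF inj])
      from independent_familyD[OF ind this i(1)] show "c y = 0" using i(2) by simp
    qed (use assms in simp)
  qed
next
  assume "inj_on f I \<and> independent (f ` I)"
  then have inj: "inj_on f I" and ind: "independent (f ` I)" by auto
  show "independent_family f I"
    unfolding independent_family_def
  proof (intro allI impI ballI)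
    fix c i assume sum0: "(\<Sum>i\<in>I. c i *\<^sub>R f i) = 0" and i: "i \<in> I"
    let ?c = "\<lambda>y. c (inv_into I f y)"
    have "(\<Sum>y\<in>f ` I. ?c y *\<^sub>R y) = 0"
      using sum0 inj by (simp add: sum.reindex)
    then have "?c (f i) = 0"
      using independentD[OF ind, of "f ` I" ?c "f i"] assms i by blast
    then show "c i = 0" using inj i by simp
  qed
qed

lemma independent_family_subset:
  assumes "finite J" "independent_family f J" "I \<subseteq> J"
  shows "independent_family f I"
  unfolding independent_family_def
proof (intro allI impI ballI)
  fix c i assume sum0: "(\<Sum>i\<in>I. c i *\<^sub>R f i) = 0" and "i \<in> I"
  let ?c = "\<lambda>j. if j \<in> I then c j else 0"
  have "(\<Sum>j\<in>J. ?c j *\<^sub>R f j) = (\<Sum>i\<in>I. c i *\<^sub>R f i)"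
    using assms(1,3) by (intro sum.mono_neutral_cong_right) auto
  then have "?c i = 0"
    using independent_familyD[OF assms(2), of ?c i] sum0 \<open>i \<in> I\<close> assms(3) by auto
  then show "c i = 0" using \<open>i \<in> I\<close> by simp
qed

lemma independent_family_dim_eq_card:
  assumes "finite J" "independent_family f J"
  shows "dim (f ` J) = card J"
proof -
  have "inj_on f J" "independent (f ` J)"
    using assms independent_family_iff by blast+
  then show ?thesis by (simp add: dim_eq_card_independent card_image)
qed

lemma dim_eq_if_subset_insert_0:
  fixes X Y :: "'a::euclidean_space set"
  assumes "Y \<subseteq> X" "X \<subseteq> insert 0 Y"
  shows "dim X = dim Y"
proof -
  have "span X \<subseteq> span Y" using span_mono[OF assms(2)] by (simp add: span_insert_0)
  then have "span X = span Y" using span_mono[OF assms(1)] by blast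
  then show ?thesis by (rule span_eq_dim)
qed

definition restrict_vec :: "'n set \<Rightarrow> 'a::zero^'n \<Rightarrow> 'a^'n" where
  "restrict_vec S x = (\<chi> i. if i \<in> S then x$i else 0)"

definition pad_identity :: "'a::zero_neq_one^'n^'n \<Rightarrow> 'n set \<Rightarrow> 'a^'n^'n" where
  "pad_identity M S = (\<chi> i j. if i \<in> S \<and> j \<in> S then M$i$j else if i = j then 1 else 0)"

lemma principal_det_eq_det_pad_identity:
  fixes M :: "real^'n::finite^'n"
  shows "principal_det M S = det (pad_identity M S)"
proof -
  have term_0: "(\<Prod>i\<in>UNIV. pad_identity M S $ i $ p i) = 0"
    if p: "p permutes UNIV" and not_p: "\<not> p permutes S" for p
  proof -
    obtain i where "i \<notin> S" "p i \<noteq> i"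
      using permutes_superset[OF p, of S] not_p by blast
    then have "pad_identity M S $ i $ p i = 0" by (simp add: pad_identity_def)
    then show ?thesis by (intro prod_zero) auto
  qed
  have term_eq: "(\<Prod>i\<in>UNIV. pad_identity M S $ i $ p i) = (\<Prod>i\<in>S. M $ i $ p i)"
    if p: "p permutes S" for p
  proof -
    have "(\<Prod>i\<in>UNIV. pad_identity M S $ i $ p i) = (\<Prod>i\<in>S. pad_identity M S $ i $ p i)"
      using p by (intro prod.mono_neutral_right) (auto simp: pad_identity_def permutes_not_in)
    also have "\<dots> = (\<Prod>i\<in>S. M $ i $ p i)"
      using p by (intro prod.cong) (auto simp: pad_identity_def permutes_in_image)
    finally show ?thesis .
  qed
  have "det (pad_identity M S)
      = (\<Sum>p\<in>{p. p permutes S}. of_int (sign p) * (\<Prod>i\<in>UNIV. pad_identity M S $ i $ p i))"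
    unfolding det_def
    by (rule sum.mono_neutral_right) (auto intro: permutes_subset simp: term_0)
  also have "\<dots> = principal_det M S"
    unfolding principal_det_def by (intro sum.cong) (simp_all add: term_eq)
  finally show ?thesis by simp
qed

lemma principal_det_eq_0_if_kernel:
  fixes M :: "real^'n::finite^'n"
  assumes "M *v x = 0" "x \<noteq> 0" "\<And>i. i \<notin> S \<Longrightarrow> x$i = 0"
  shows "principal_det M S = 0"
proof -
  have "(pad_identity M S *v x) $ i = 0" for i
  proof (cases "i \<in> S")
    case True
    then have "(pad_identity M S *v x) $ i = (M *v x) $ i"
      using assms(3) by (auto simp: matrix_vector_mult_def pad_identity_def intro!: sum.cong)
    then show ?thesis using assms(1) by simp
  next
    case False
    then have "(pad_identity M S *v x) $ i = (\<Sum>j\<in>UNIV. (if i = j then 1 else 0) * x $ j)"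
      by (simp add: matrix_vector_mult_def pad_identity_def)
    also have "\<dots> = (\<Sum>j\<in>UNIV. if i = j then x $ j else 0)"
      by (intro sum.cong) auto
    also have "\<dots> = x $ i" by simp
    finally have "(pad_identity M S *v x) $ i = x $ i" .
    then show ?thesis using False assms(3) by simp
  qed
  then have "pad_identity M S *v x = 0" by (simp add: vec_eq_iff)
  then have "det (pad_identity M S) = 0"
    using assms(2) invertible_det_nz invertible_left_inverse matrix_left_invertible_ker by metis
  then show ?thesis by (simp add: principal_det_eq_det_pad_identity)
qed

lemma proj_matrix_orthogonal_projection:
  fixes H :: "(real^'u::finite) set"
  assumes "subspace H"
  shows "proj_matrix H *v x \<in> H" and "h \<in> H \<Longrightarrow> inner (x - proj_matrix H *v x) h = 0"
proof -
  let ?is_proj = "\<lambda>P::real^'u^'u. \<forall>x. P *v x \<in> H \<and> (\<forall>h\<in>H. inner (x - P *v x) h = 0)"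
  obtain Bs where Bs: "Bs \<subseteq> H" "pairwise orthogonal Bs" "\<And>x. x \<in> Bs \<Longrightarrow> norm x = 1"
      "independent Bs" "span Bs = H"
    using orthonormal_basis_subspace[OF assms] by metis
  have "finite Bs" using Bs(4) independent_imp_finite by blast
  define P :: "real^'u^'u" where "P = (\<chi> i j. \<Sum>b\<in>Bs. b$i * b$j)"
  have P_expansion: "P *v x = (\<Sum>b\<in>Bs. inner b x *\<^sub>R b)" for x
    unfolding P_def
    apply (simp add: matrix_vector_mult_def vec_eq_iff inner_vec_def sum_distrib_left
        sum_distrib_right)
    apply (subst sum.swap)
    apply (simp add: algebra_simps)
    done
  have exists: "?is_proj P"
  proof
    fix x
    have "P *v x \<in> H" unfolding P_expansion using Bs(1) assms
      by (intro subspace_sum subspace_scale) auto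
    moreover have "inner (x - P *v x) b' = 0" if "b' \<in> Bs" for b'
    proof -
      have "inner (P *v x) b' = (\<Sum>b\<in>Bs. inner b x * inner b b')"
        unfolding P_expansion by (simp add: inner_sum_left)
      also have "\<dots> = (\<Sum>b\<in>{b'}. inner b x * inner b b')"
        using that \<open>finite Bs\<close> Bs(2)
        by (intro sum.mono_neutral_right) (auto simp: pairwise_def orthogonal_def)
      also have "\<dots> = inner b' x"
        using Bs(3)[OF that] by (simp add: inner_commute dot_square_norm)
      finally show ?thesis by (simp add: inner_diff_left inner_diff_right inner_commute)
    qed
    then have "\<forall>h\<in>H. inner (x - P *v x) h = 0"
      using orthogonal_to_span[of _ Bs "x - P *v x"] Bs(5) unfolding orthogonal_def by blast
    ultimately show "P *v x \<in> H \<and> (\<forall>h\<in>H. inner (x - P *v x) h = 0)" by blast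
  qed
  have unique: "P1 = P2" if "?is_proj P1" "?is_proj P2" for P1 P2
  proof -
    have "P1 *v x = P2 *v x" for x
    proof -
      let ?z = "P1 *v x - P2 *v x"
      have "?z \<in> H" using that assms by (simp add: subspace_diff)
      then have "inner (x - P1 *v x) ?z = 0" "inner (x - P2 *v x) ?z = 0" using that by auto
      then have "inner ?z ?z = 0" by (simp add: inner_diff_left)
      then show ?thesis by simp
    qed
    then show ?thesis by (simp add: matrix_eq)
  qed
  have "?is_proj (proj_matrix H)"
    unfolding proj_matrix_def by (rule theI[of ?is_proj P]) (use exists unique in blast)+
  then show "proj_matrix H *v x \<in> H" and "h \<in> H \<Longrightarrow> inner (x - proj_matrix H *v x) h = 0"
    by blast+
qed

lemma proj_matrix_eq_0_if_orthogonal: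
  fixes H :: "(real^'u::finite) set"
  assumes "subspace H" and "\<And>h. h \<in> H \<Longrightarrow> inner x h = 0"
  shows "proj_matrix H *v x = 0"
proof -
  let ?p = "proj_matrix H *v x"
  have "inner (x - ?p) ?p = 0"
    using proj_matrix_orthogonal_projection[OF assms(1)] by blast
  then have "inner ?p ?p = inner x ?p" by (simp add: inner_diff_left)
  also have "\<dots> = 0"
    using assms proj_matrix_orthogonal_projection(1)[OF assms(1)] by blast
  finally show ?thesis by simp
qed

lemma inner_row_eq_matrix_vector_mult:
  fixes B :: "real^'n::finite^'m::finite"
  shows "inner x (row v B) = (B *v x) $ v"
  by (simp add: inner_vec_def row_def matrix_vector_mult_def mult.commute)

lemma det_measure_pos_card: "det_measure B T > 0 \<Longrightarrow> card T = rank B"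
  unfolding det_measure_def by (auto split: if_splits)

lemma det_measure_pos_independent_columns:
  fixes B :: "real^'u::finite^'v::finite"
  assumes "det_measure B T > 0"
  shows "independent_family (\<lambda>u. column u B) T"
  unfolding independent_family_def
proof (intro allI impI ballI, rule ccontr)
  fix a u0 assume sum0: "(\<Sum>u\<in>T. a u *\<^sub>R column u B) = 0" and "u0 \<in> T" "a u0 \<noteq> 0"
  define x :: "real^'u" where "x = (\<chi> u. if u \<in> T then a u else 0)"
  have "B *v x = (\<Sum>u\<in>UNIV. x$u *s column u B)" by (rule matrix_mult_sum)
  also have "\<dots> = (\<Sum>u\<in>T. a u *\<^sub>R column u B)"
    by (rule sum.mono_neutral_cong_right) (auto simp: x_def scalar_mult_eq_scaleR)
  finally have "B *v x = 0" using sum0 by simp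
  then have "inner x h = 0" if "h \<in> row_space B" for h
    using that orthogonal_to_span[of h "rows B" x] inner_row_eq_matrix_vector_mult[of x _ B]
    unfolding row_space_def orthogonal_def rows_def by auto
  then have "proj_matrix (row_space B) *v x = 0"
    unfolding row_space_def by (intro proj_matrix_eq_0_if_orthogonal subspace_span)
  moreover have "x \<noteq> 0" using \<open>u0 \<in> T\<close> \<open>a u0 \<noteq> 0\<close> by (auto simp: x_def vec_eq_iff)
  ultimately have "principal_det (proj_matrix (row_space B)) T = 0"
    by (rule principal_det_eq_0_if_kernel) (simp add: x_def)
  then show False using assms by (simp add: det_measure_def split: if_splits)
qed

lemma span_columns_eq_if_card_eq_rank:
  fixes B :: "real^'u::finite^'v::finite"
  assumes "card T = rank B" and "independent_family (\<lambda>u. column u B) T"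
  shows "span ((\<lambda>u. column u B) ` T) = span (columns B)"
proof -
  have "dim ((\<lambda>u. column u B) ` T) = card T"
    using independent_family_dim_eq_card[OF finite assms(2)] .
  also have "\<dots> = dim (columns B)" using assms(1) column_rank_def by metis
  finally show ?thesis
    using dim_eq_span[of "(\<lambda>u. column u B) ` T" "columns B"]
    by (auto simp: columns_def intro: span_mono)
qed

lemma C4_free_private_neighbour:
  fixes E :: "'v \<Rightarrow> 'u::finite \<Rightarrow> bool"
  assumes "C4_free E" and "card {u. E v0 u} = d" and "finite J" "card J < d" "v0 \<in> J"
  obtains w where "E v0 w" and "\<And>v. v \<in> J - {v0} \<Longrightarrow> \<not> E v w"
proof -
  let ?N = "\<lambda>v. {u. E v u}"
  let ?shared = "\<Union>v\<in>J - {v0}. ?N v0 \<inter> ?N v"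
  have "card ?shared \<le> (\<Sum>v\<in>J - {v0}. card (?N v0 \<inter> ?N v))" by (rule card_UN_le) (simp add: assms)
  also have "\<dots> \<le> (\<Sum>v\<in>J - {v0}. 1)"
  proof (rule sum_mono)
    fix v assume "v \<in> J - {v0}"
    then have "v0 \<noteq> v" by blast
    then have "card {u. E v0 u \<and> E v u} \<le> 1" using assms(1) unfolding C4_free_def by blast
    then show "card (?N v0 \<inter> ?N v) \<le> 1" by (simp add: Collect_conj_eq)
  qed
  also have "\<dots> = card J - 1" using assms(5) by simp
  also have "\<dots> < card (?N v0)" using assms(2,4) by linarith
  finally have "\<not> ?N v0 \<subseteq> ?shared" by (meson card_mono finite leD)
  then show ?thesis using that by blast
qed

lemma signed_adjacency_nonzero_iff: "signed_adjacency E B \<Longrightarrow> B$v$u \<noteq> 0 \<longleftrightarrow> E v u"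
  unfolding signed_adjacency_def by force

text \<open>At a private neighbour w of v0 only the row of v0 has a nonzero entry.\<close>
lemma independent_family_rows_if_C4_free:
  fixes E :: "'v::finite \<Rightarrow> 'u::finite \<Rightarrow> bool" and B :: "real^'u^'v"
  assumes "C4_free E" and "\<And>v. card {u. E v u} = d" and "signed_adjacency E B" and "card J < d"
  shows "independent_family (\<lambda>v. row v B) J"
  unfolding independent_family_def
proof (intro allI impI ballI)
  fix a v0 assume sum0: "(\<Sum>v\<in>J. a v *\<^sub>R row v B) = 0" and "v0 \<in> J"
  obtain w where w: "E v0 w" "\<And>v. v \<in> J - {v0} \<Longrightarrow> \<not> E v w"
    using C4_free_private_neighbour[OF assms(1,2) finite assms(4) \<open>v0 \<in> J\<close>] by blast
  have B_0: "B$v$w = 0" if "v \<in> J - {v0}" for v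
    using w(2)[OF that] signed_adjacency_nonzero_iff[OF assms(3)] by blast
  have "0 = (\<Sum>v\<in>J. a v * B$v$w)"
    using arg_cong[OF sum0, of "\<lambda>x. x $ w"] by (simp add: row_def)
  also have "\<dots> = a v0 * B$v0$w + (\<Sum>v\<in>J - {v0}. a v * B$v$w)"
    using \<open>v0 \<in> J\<close> by (simp add: sum.remove)
  also have "\<dots> = a v0 * B$v0$w"
    using B_0 by simp
  finally have "a v0 * B$v0$w = 0" by simp
  moreover have "B$v0$w \<noteq> 0" using w(1) signed_adjacency_nonzero_iff[OF assms(3)] by blast
  ultimately show "a v0 = 0" by simp
qed

lemma independent_family_restricted_rows:
  fixes B :: "real^'u::finite^'v::finite"
  assumes "det_measure B T > 0" and "S \<subseteq> T"
    and "independent_family (\<lambda>v. row v B) J"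
    and "\<And>v u. v \<in> J \<Longrightarrow> u \<in> T - S \<Longrightarrow> B$v$u = 0"
  shows "independent_family (\<lambda>v. restrict_vec S (row v B)) J"
  unfolding independent_family_def
proof (intro allI impI ballI)
  fix a v0 assume sum0: "(\<Sum>v\<in>J. a v *\<^sub>R restrict_vec S (row v B)) = 0" and "v0 \<in> J"
  define y :: "real^'v" where "y = (\<chi> v. if v \<in> J then a v else 0)"
  have y_column: "inner y (column u B) = (\<Sum>v\<in>J. a v *\<^sub>R row v B) $ u" for u
  proof -
    have "inner y (column u B) = (\<Sum>v\<in>UNIV. y$v * B$v$u)"
      by (simp add: inner_vec_def column_def)
    also have "\<dots> = (\<Sum>v\<in>J. a v * B$v$u)"
      by (rule sum.mono_neutral_cong_right) (auto simp: y_def)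
    finally show ?thesis by (simp add: row_def)
  qed
  have "inner y (column u B) = 0" if "u \<in> T" for u
  proof (cases "u \<in> S")
    case True
    then show ?thesis
      using arg_cong[OF sum0, of "\<lambda>x. x $ u"] by (simp add: y_column restrict_vec_def row_def)
  next
    case False
    then show ?thesis using assms(4) \<open>u \<in> T\<close> by (simp add: y_column row_def)
  qed
  then have orthogonal_columns: "inner y c = 0" if "c \<in> span (columns B)" for c
    using that orthogonal_to_span[of c "(\<lambda>u. column u B) ` T" y]
      span_columns_eq_if_card_eq_rank[OF det_measure_pos_card det_measure_pos_independent_columns,
        OF assms(1) assms(1)]
    unfolding orthogonal_def by auto
  have "(\<Sum>v\<in>J. a v *\<^sub>R row v B) $ w = 0" for w
  proof -
    have "column w B \<in> span (columns B)" by (auto simp: columns_def intro: span_base)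
    from orthogonal_columns[OF this] show ?thesis by (simp only: y_column)
  qed
  then have "(\<Sum>v\<in>J. a v *\<^sub>R row v B) = 0" by (simp add: vec_eq_iff)
  then show "a v0 = 0" using independent_familyD[OF assms(3)] \<open>v0 \<in> J\<close> by blast
qed

lemma dim_restricted_rows:
  fixes B :: "real^'u::finite^'v::finite"
  assumes "independent_family (\<lambda>u. column u B) S"
    and "\<And>v u. u \<in> S \<Longrightarrow> B$v$u \<noteq> 0 \<Longrightarrow> v \<in> J"
  shows "dim ((\<lambda>v. restrict_vec S (row v B)) ` J) = card S"
proof -
  define N :: "real^'u^'v" where "N = (\<chi> v. restrict_vec S (row v B))"
  have "restrict_vec S (row v B) = 0" if "v \<notin> J" for v
    using assms(2) that by (auto simp: restrict_vec_def row_def vec_eq_iff)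
  then have "dim ((\<lambda>v. restrict_vec S (row v B)) ` J) = dim (rows N)"
    by (intro dim_eq_if_subset_insert_0[symmetric]) (auto simp: rows_def N_def row_def)
  also have "\<dots> = dim (columns N)" using row_rank_def column_rank_def by metis
  also have "\<dots> = dim ((\<lambda>u. column u B) ` S)"
  proof (rule dim_eq_if_subset_insert_0)
    have column_N: "column u N = (if u \<in> S then column u B else 0)" for u
      by (simp add: N_def column_def restrict_vec_def row_def vec_eq_iff)
    show "columns N \<subseteq> insert 0 ((\<lambda>u. column u B) ` S)"
      by (auto simp: columns_def column_N)
    show "(\<lambda>u. column u B) ` S \<subseteq> columns N"
      unfolding columns_def by (force simp: column_N)
  qed
  also have "\<dots> = card S"
    using independent_family_dim_eq_card[OF finite assms(1)] .
  finally show ?thesis .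
qed

lemma det_nonzero_ex_permutation:
  fixes A :: "real^'n::finite^'n"
  assumes "det A \<noteq> 0"
  shows "\<exists>p. p permutes UNIV \<and> (\<forall>i. A$i$p i \<noteq> 0)"
proof -
  obtain p where "p \<in> {p. p permutes UNIV}" "of_int (sign p) * (\<Prod>i\<in>UNIV. A$i$p i) \<noteq> 0"
    using assms sum.not_neutral_contains_not_neutral unfolding det_def by blast
  then show ?thesis by auto
qed

lemma det_rows_padded_with_axes_nonzero:
  fixes h :: "'u::finite \<Rightarrow> real^'u"
  assumes ind: "independent_family h S" and supp: "\<And>i u. i \<in> S \<Longrightarrow> u \<notin> S \<Longrightarrow> h i $ u = 0"
  shows "det (\<chi> i. if i \<in> S then h i else axis i 1) \<noteq> 0"
proof -
  define A :: "real^'u^'u" where "A = (\<chi> i. if i \<in> S then h i else axis i 1)"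
  have "y = 0" if y: "transpose A *v y = 0" for y
  proof -
    have column_sum: "(\<Sum>i\<in>UNIV. y$i * A$i$j) = 0" for j
      using y by (simp add: vec_eq_iff matrix_vector_mult_def transpose_def mult.commute)
    have y_outside: "y$j = 0" if "j \<notin> S" for j
    proof -
      have "(\<Sum>i\<in>UNIV. y$i * A$i$j) = (\<Sum>i\<in>UNIV. if i = j then y$i else 0)"
        using that supp by (intro sum.cong) (auto simp: A_def axis_def)
      then show ?thesis using column_sum[of j] by simp
    qed
    have "(\<Sum>i\<in>S. y$i *\<^sub>R h i) $ j = 0" for j
    proof -
      have "(\<Sum>i\<in>S. y$i *\<^sub>R h i) $ j = (\<Sum>i\<in>S. y$i * A$i$j)"
        by (auto simp: A_def intro!: sum.cong)
      also have "\<dots> = (\<Sum>i\<in>UNIV. y$i * A$i$j)"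
        using y_outside by (intro sum.mono_neutral_left) auto
      finally show ?thesis using column_sum by simp
    qed
    then have "(\<Sum>i\<in>S. y$i *\<^sub>R h i) = 0" by (simp add: vec_eq_iff)
    then have "y$i = 0" if "i \<in> S" for i
      using independent_familyD[OF ind] that by metis
    then show "y = 0" using y_outside by (auto simp: vec_eq_iff)
  qed
  then have "invertible (transpose A)"
    unfolding invertible_left_inverse matrix_left_invertible_ker by blast
  then show ?thesis by (simp add: invertible_det_nz A_def)
qed

text \<open>A nonvanishing term of the Leibniz expansion of the matrix above is a permutation of S.\<close>
lemma independent_obtains_transversal:
  fixes X :: "(real^'u::finite) set"
  assumes ind: "independent X" and supp: "\<And>x u. x \<in> X \<Longrightarrow> u \<notin> S \<Longrightarrow> x$u = 0"
    and "card X = card S"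
  obtains \<tau> where "bij_betw \<tau> X S" and "\<And>x. x \<in> X \<Longrightarrow> x$(\<tau> x) \<noteq> 0"
proof -
  obtain h where h: "bij_betw h S X"
    using finite_same_card_bij[OF finite independent_imp_finite[OF ind]] assms(3) by auto
  define A :: "real^'u^'u" where "A = (\<chi> i. if i \<in> S then h i else axis i 1)"
  have "independent_family h S"
    unfolding independent_family_iff[OF finite] using h ind by (simp add: bij_betw_def)
  moreover have "h i $ u = 0" if "i \<in> S" "u \<notin> S" for i u
    using h supp that by (auto simp: bij_betw_def)
  ultimately have "det A \<noteq> 0"
    unfolding A_def by (rule det_rows_padded_with_axes_nonzero)
  then obtain p where p: "p permutes UNIV" and nonzero: "\<And>i. A$i$p i \<noteq> 0"
    using det_nonzero_ex_permutation by blast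
  have "p i = i" if "i \<notin> S" for i
  proof -
    have "A$i$p i = (if p i = i then 1 else 0)" using that by (simp add: A_def axis_def)
    then show ?thesis using nonzero[of i] by presburger
  qed
  then have "bij_betw p S S"
    using permutes_superset[OF p, of S] by (auto intro: permutes_imp_bij)
  then have "bij_betw (p \<circ> inv_into S h) X S"
    using bij_betw_trans[OF bij_betw_inv_into[OF h]] by blast
  moreover have "x$((p \<circ> inv_into S h) x) \<noteq> 0" if "x \<in> X" for x
  proof -
    have "x \<in> h ` S" using h that by (simp add: bij_betw_def)
    then have "inv_into S h x \<in> S" "h (inv_into S h x) = x"
      by (simp_all add: inv_into_into f_inv_into_f)
    then show ?thesis using nonzero[of "inv_into S h x"] by (simp add: A_def)
  qed
  ultimately show ?thesis using that by blast
qed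

lemma bij_betw_extend:
  assumes "inj_on f I" "f ` I \<subseteq> Y" "Y \<subseteq> f ` J" "I \<subseteq> J"
  obtains R where "I \<subseteq> R" "R \<subseteq> J" "bij_betw f R Y"
proof -
  have "Y - f ` I \<subseteq> f ` J" using assms(3) by blast
  then obtain U where U: "U \<subseteq> J" "inj_on f U" "Y - f ` I = f ` U"
    unfolding subset_image_inj by blast
  have "inj_on f (I \<union> U)"
    using assms(1) U(2,3) by (auto simp: inj_on_Un)
  moreover have "f ` (I \<union> U) = Y" using assms(2) U(3) by auto
  ultimately show ?thesis using that[of "I \<union> U"] assms(4) U(1) by (simp add: bij_betw_def)
qed

text \<open>Extend the independent rows indexed by I to a basis of the row space and match
  the basis rows to S along nonzero entries.\<close>
lemma independent_family_obtains_transversal: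
  fixes f :: "'i \<Rightarrow> real^'u::finite"
  assumes "finite J" "I \<subseteq> J" "independent_family f I" "dim (f ` J) = card S"
    and "\<And>j u. j \<in> J \<Longrightarrow> u \<notin> S \<Longrightarrow> f j $ u = 0"
  obtains R \<sigma> where "I \<subseteq> R" "R \<subseteq> J" "bij_betw \<sigma> R S" "\<And>j. j \<in> R \<Longrightarrow> f j $ \<sigma> j \<noteq> 0"
proof -
  have "finite I" using assms(1,2) by (rule finite_subset[rotated])
  then have inj: "inj_on f I" and "independent (f ` I)"
    using assms(3) independent_family_iff by blast+
  then obtain Y where Y: "f ` I \<subseteq> Y" "Y \<subseteq> f ` J" "independent Y" "f ` J \<subseteq> span Y"
    using maximal_independent_subset_extend[of "f ` I" "f ` J"] assms(2) by blast
  have "span Y = span (f ` J)"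
    using Y(2,4) by (metis span_mono span_span subset_antisym span_minimal subspace_span)
  then have "card Y = card S"
    using assms(4) dim_eq_card_independent[OF Y(3)] span_eq_dim by metis
  moreover have "y $ u = 0" if "y \<in> Y" "u \<notin> S" for y u
    using Y(2) assms(5) that by blast
  ultimately obtain \<tau> where \<tau>: "bij_betw \<tau> Y S" "\<And>y. y \<in> Y \<Longrightarrow> y $ \<tau> y \<noteq> 0"
    using independent_obtains_transversal[OF Y(3)] by blast
  obtain R where R: "I \<subseteq> R" "R \<subseteq> J" "bij_betw f R Y"
    using bij_betw_extend[OF inj Y(1,2) assms(2)] .
  have "bij_betw (\<tau> \<circ> f) R S" using bij_betw_trans[OF R(3) \<tau>(1)] .
  moreover have "f j $ (\<tau> \<circ> f) j \<noteq> 0" if "j \<in> R" for j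
    using \<tau>(2) R(3) that by (auto simp: bij_betw_def)
  ultimately show ?thesis using that R(1,2) by blast
qed

section \<open>Walks and distances\<close>

lemma walk_in_iff_successively:
  "walk_in W A xs \<longleftrightarrow> xs \<noteq> [] \<and> set xs \<subseteq> W \<and> successively A xs"
  by (simp add: walk_in_def successively_conv_nth)

lemma conn_within_0_iff: "conn_within W A 0 a x \<longleftrightarrow> a \<in> W \<and> x = a"
proof
  show "conn_within W A 0 a x \<Longrightarrow> a \<in> W \<and> x = a"
    unfolding conn_within_def walk_in_iff_successively by (auto simp: length_Suc_conv)
  show "a \<in> W \<and> x = a \<Longrightarrow> conn_within W A 0 a x"
    unfolding conn_within_def walk_in_iff_successively by (intro exI[of _ "[a]"]) simp
qed

lemma conn_within_Suc_iff:
  "conn_within W A (Suc n) a y \<longleftrightarrow> (\<exists>x. conn_within W A n a x \<and> A x y \<and> y \<in> W)"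
proof
  assume "conn_within W A (Suc n) a y"
  then obtain xs where xs: "walk_in W A xs" "hd xs = a" "last xs = y" "length xs = Suc (Suc n)"
    unfolding conn_within_def by blast
  define ys where "ys = butlast xs"
  have "xs \<noteq> []" using xs(4) by auto
  then have xs_eq: "xs = ys @ [y]" using xs(3) unfolding ys_def by (metis append_butlast_last_id)
  have "ys \<noteq> []" using xs(4) by (auto simp: ys_def simp flip: length_greater_0_conv)
  with xs xs_eq show "\<exists>x. conn_within W A n a x \<and> A x y \<and> y \<in> W"
    unfolding conn_within_def walk_in_iff_successively
    by (intro exI[of _ "last ys"] conjI exI[of _ ys]) (auto simp: successively_append_iff)
next
  assume "\<exists>x. conn_within W A n a x \<and> A x y \<and> y \<in> W"
  then obtain x xs where "walk_in W A xs" "hd xs = a" "last xs = x" "length xs = Suc n"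
    "A x y" "y \<in> W"
    unfolding conn_within_def by blast
  then show "conn_within W A (Suc n) a y"
    unfolding conn_within_def walk_in_iff_successively
    by (intro exI[of _ "xs @ [y]"]) (auto simp: successively_append_iff)
qed

lemma conn_within_mono: "W \<subseteq> W' \<Longrightarrow> conn_within W A n a x \<Longrightarrow> conn_within W' A n a x"
  unfolding conn_within_def walk_in_def by blast

lemma conn_within_in: "conn_within W A n a x \<Longrightarrow> x \<in> W"
  by (cases n) (auto simp: conn_within_0_iff conn_within_Suc_iff)

lemma gdist_conn_within: "conn_within W A n a x \<Longrightarrow> conn_within W A (gdist W A a x) a x"
  unfolding gdist_def by (rule LeastI)

lemma gdist_le: "conn_within W A n a x \<Longrightarrow> gdist W A a x \<le> n"
  unfolding gdist_def by (rule Least_le)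

lemma gdist_eq_0_iff: "conn_within W A n a x \<Longrightarrow> gdist W A a x = 0 \<longleftrightarrow> x = a"
  using gdist_conn_within[of W A n a x] gdist_le[of W A 0 a a] conn_within_in[of W A n a x]
  by (auto simp: conn_within_0_iff)

lemma gdist_adjacent_le:
  assumes "conn_within W A n a x" "y \<in> W" "A x y"
  shows "gdist W A a y \<le> Suc (gdist W A a x)"
  using assms gdist_conn_within[OF assms(1)] by (blast intro: gdist_le conn_within_Suc_iff[THEN iffD2])

lemma gdist_Suc_obtains_predecessor:
  assumes "conn_within W A n a x" "gdist W A a x = Suc m"
  obtains z where "conn_within W A m a z" "A z x" "gdist W A a z = m"
proof -
  obtain z where z: "conn_within W A m a z" "A z x" "x \<in> W"
    using gdist_conn_within[OF assms(1)] assms(2) conn_within_Suc_iff by metis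
  have "gdist W A a z \<le> m" by (rule gdist_le[OF z(1)])
  moreover have "gdist W A a x \<le> Suc (gdist W A a z)" by (rule gdist_adjacent_le[OF z(1) z(3) z(2)])
  ultimately have "gdist W A a z = m" using assms(2) by linarith
  with z that show ?thesis by blast
qed

text \<open>Walk from both vertices towards a common ancestor.\<close>
lemma same_gdist_obtains_path:
  assumes sym: "\<And>x y. A x y = A y x"
  shows "conn_within W A n1 a y1 \<Longrightarrow> conn_within W A n2 a y2 \<Longrightarrow> y1 \<noteq> y2 \<Longrightarrow>
    gdist W A a y1 = m \<Longrightarrow> gdist W A a y2 = m \<Longrightarrow>
    \<exists>c. walk_in W A c \<and> hd c = y1 \<and> last c = y2 \<and> distinct c \<and> length c \<ge> 2 \<and>
        (\<forall>z\<in>set c. gdist W A a z \<le> m)"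
proof (induction m arbitrary: y1 y2 n1 n2)
  case 0
  then show ?case by (simp add: gdist_eq_0_iff)
next
  case (Suc m)
  obtain z1 where z1: "conn_within W A m a z1" "A z1 y1" "gdist W A a z1 = m"
    using gdist_Suc_obtains_predecessor[OF Suc.prems(1,4)] .
  obtain z2 where z2: "conn_within W A m a z2" "A z2 y2" "gdist W A a z2 = m"
    using gdist_Suc_obtains_predecessor[OF Suc.prems(2,5)] .
  have in_W: "y1 \<in> W" "y2 \<in> W" "z1 \<in> W" "z2 \<in> W"
    using conn_within_in Suc.prems(1,2) z1(1) z2(1) by metis+
  show ?case
  proof (cases "z1 = z2")
    case True
    have "A y1 z1" "A z1 y2" using z1(2) z2(2) True sym by auto
    moreover have "y1 \<noteq> z1" "y2 \<noteq> z1" using z1(3) z2(3) Suc.prems(4,5) True by auto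
    ultimately show ?thesis
      using in_W True Suc.prems(3-5) z1(3)
      by (intro exI[of _ "[y1, z1, y2]"]) (simp add: walk_in_iff_successively)
  next
    case False
    obtain c where c: "walk_in W A c" "hd c = z1" "last c = z2" "distinct c" "length c \<ge> 2"
      "\<forall>z\<in>set c. gdist W A a z \<le> m"
      using Suc.IH[OF z1(1) z2(1) False z1(3) z2(3)] by blast
    have "y1 \<notin> set c" "y2 \<notin> set c" using c(6) Suc.prems(4,5) by auto
    moreover have "c \<noteq> []" using c(5) by auto
    moreover have "A y1 (hd c)" "A (last c) y2" using z1(2) z2(2) c(2,3) sym by auto
    moreover have "\<forall>z\<in>set (y1 # c @ [y2]). gdist W A a z \<le> Suc m"
      using c(6) Suc.prems(4,5) by auto
    ultimately show ?thesis
      using c(1-4) in_W Suc.prems(3)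
      by (intro exI[of _ "y1 # c @ [y2]"])
        (simp add: walk_in_iff_successively successively_append_iff successively_Cons)
  qed
qed

lemma has_cycle_if_two_predecessors:
  assumes sym: "\<And>x y. A x y = A y x"
    and "conn_within W A n1 a y1" "conn_within W A n2 a y2" "y1 \<noteq> y2"
    and "gdist W A a y1 = m" "gdist W A a y2 = m"
    and "conn_within W A n a x" "gdist W A a x = Suc m"
    and "A x y1" "A x y2"
  shows "has_cycle W A"
proof -
  obtain c where c: "walk_in W A c" "hd c = y1" "last c = y2" "distinct c" "length c \<ge> 2"
      "\<forall>z\<in>set c. gdist W A a z \<le> m"
    using same_gdist_obtains_path[OF sym assms(2-6)] by blast
  have "x \<notin> set c" using c(6) assms(8) by auto
  moreover have "x \<in> W" using conn_within_in assms(7) by metis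
  moreover have "c \<noteq> []" using c(5) by auto
  moreover have "A x (hd c)" "A (last c) x" using assms(9,10) c(2,3) sym by auto
  ultimately show ?thesis
    unfolding has_cycle_def using c(1,4,5)
    by (intro exI[of _ "x # c"]) (simp add: walk_in_iff_successively successively_Cons)
qed

section \<open>Balls in G[S]\<close>

lemma adj_S_sym: "adj_S E S x y = adj_S E S y x"
  by (cases x; cases y) auto

lemma adj_S_Inr_iff: "adj_S E S z (Inr u) \<longleftrightarrow> (\<exists>v. z = Inl v \<and> u \<in> S \<and> E v u)"
  by (cases z) auto

lemma conn_within_adj_S_parity:
  "conn_within W (adj_S E S) n (Inl o0) x \<Longrightarrow> isl x \<longleftrightarrow> even n"
proof (induction n arbitrary: x)
  case 0
  then show ?case by (simp add: conn_within_0_iff)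
next
  case (Suc n)
  then obtain z where z: "conn_within W (adj_S E S) n (Inl o0) z" "adj_S E S z x"
    by (auto simp: conn_within_Suc_iff)
  have "isl z \<longleftrightarrow> even n" using Suc.IH[OF z(1)] .
  moreover have "isl z \<longleftrightarrow> \<not> isl x" using z(2) by (cases z; cases x) auto
  ultimately show ?case by auto
qed

lemma root_in_ball_vertices: "Inl o0 \<in> ball_vertices E S o0 r"
  unfolding ball_vertices_def by (rule CollectI, rule exI[of _ 0]) (simp add: conn_within_0_iff)

lemma conn_within_ball_vertices:
  "conn_within UNIV (adj_S E S) n (Inl o0) x \<Longrightarrow> n \<le> r \<Longrightarrow>
   conn_within (ball_vertices E S o0 r) (adj_S E S) n (Inl o0) x"
proof (induction n arbitrary: x)
  case 0
  then show ?case by (simp add: conn_within_0_iff root_in_ball_vertices)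
next
  case (Suc n)
  then obtain z where "conn_within UNIV (adj_S E S) n (Inl o0) z" "adj_S E S z x"
    by (auto simp: conn_within_Suc_iff)
  moreover have "x \<in> ball_vertices E S o0 r"
    using Suc.prems unfolding ball_vertices_def by blast
  ultimately show ?case using Suc.IH Suc.prems(2) by (auto simp: conn_within_Suc_iff)
qed

lemma
  assumes "x \<in> ball_vertices E S o0 r"
  shows conn_within_gdist_ball_vertices: "conn_within (ball_vertices E S o0 r) (adj_S E S)
      (gdist (ball_vertices E S o0 r) (adj_S E S) (Inl o0) x) (Inl o0) x"
    and gdist_ball_vertices_le: "gdist (ball_vertices E S o0 r) (adj_S E S) (Inl o0) x \<le> r"
proof -
  obtain n where "n \<le> r" "conn_within UNIV (adj_S E S) n (Inl o0) x"
    using assms unfolding ball_vertices_def by blast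
  then have conn: "conn_within (ball_vertices E S o0 r) (adj_S E S) n (Inl o0) x"
    by (simp add: conn_within_ball_vertices)
  then show "conn_within (ball_vertices E S o0 r) (adj_S E S)
      (gdist (ball_vertices E S o0 r) (adj_S E S) (Inl o0) x) (Inl o0) x"
    by (rule gdist_conn_within)
  show "gdist (ball_vertices E S o0 r) (adj_S E S) (Inl o0) x \<le> r"
    using gdist_le[OF conn] \<open>n \<le> r\<close> by linarith
qed

lemma ball_vertices_adjacent:
  assumes "x \<in> ball_vertices E S o0 r" "adj_S E S x y"
    and "gdist (ball_vertices E S o0 r) (adj_S E S) (Inl o0) x < r"
  shows "y \<in> ball_vertices E S o0 r"
proof -
  let ?n = "gdist (ball_vertices E S o0 r) (adj_S E S) (Inl o0) x"
  have "conn_within UNIV (adj_S E S) ?n (Inl o0) x"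
    using conn_within_mono[OF subset_UNIV conn_within_gdist_ball_vertices[OF assms(1)]] .
  then have "conn_within UNIV (adj_S E S) (Suc ?n) (Inl o0) y"
    using assms(2) conn_within_Suc_iff[of UNIV "adj_S E S" ?n "Inl o0" y] by blast
  moreover have "Suc ?n \<le> r" using assms(3) by simp
  ultimately have "y \<in> {x. \<exists>n\<le>r. conn_within UNIV (adj_S E S) n (Inl o0) x}" by blast
  then show ?thesis by (simp only: ball_vertices_def)
qed

section \<open>The ball as a valid tree\<close>

locale ball_tree =
  fixes k r :: nat and E :: "'v::finite \<Rightarrow> 'u::finite \<Rightarrow> bool" and T :: "'u set" and o0 :: 'v
  assumes k_pos: "k \<ge> 1"
    and degree_U: "\<And>u. card {v. E v u} = k + 1"
    and valid: "valid_tree k (ball_vertices E T o0 r) (adj_S E T) (Inl o0)"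
begin

abbreviation "BT \<equiv> ball_vertices E T o0 r"
abbreviation "depth \<equiv> gdist BT (adj_S E T) (Inl o0)"

definition "ball_V = {v. Inl v \<in> BT}"
definition "ball_U = {u. Inr u \<in> BT}"

lemma conn_within_depth: "x \<in> BT \<Longrightarrow> conn_within BT (adj_S E T) (depth x) (Inl o0) x"
  by (rule conn_within_gdist_ball_vertices)

lemma isl_iff_even_depth: "x \<in> BT \<Longrightarrow> isl x \<longleftrightarrow> even (depth x)"
  by (rule conn_within_adj_S_parity[OF conn_within_depth])

lemma depth_adjacent_le:
  "x \<in> BT \<Longrightarrow> y \<in> BT \<Longrightarrow> adj_S E T x y \<Longrightarrow> depth y \<le> Suc (depth x)"
  by (rule gdist_adjacent_le[OF conn_within_depth])

lemma even_vertices_eq: "even_vertices BT (adj_S E T) (Inl o0) = Inl ` ball_V"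
proof -
  have "x \<in> even_vertices BT (adj_S E T) (Inl o0) \<longleftrightarrow> x \<in> Inl ` ball_V" for x
    using isl_iff_even_depth[of x] by (cases x) (auto simp: even_vertices_def ball_V_def)
  then show ?thesis by blast
qed

lemma odd_vertices_eq: "odd_vertices BT (adj_S E T) (Inl o0) = Inr ` ball_U"
proof -
  have "x \<in> odd_vertices BT (adj_S E T) (Inl o0) \<longleftrightarrow> x \<in> Inr ` ball_U" for x
    using isl_iff_even_depth[of x] by (cases x) (auto simp: odd_vertices_def ball_U_def)
  then show ?thesis by blast
qed

lemma ball_U_subset: "ball_U \<subseteq> T"
proof
  fix u assume "u \<in> ball_U"
  then have u: "Inr u \<in> BT" by (simp add: ball_U_def)
  then have "odd (depth (Inr u))" using isl_iff_even_depth by fastforce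
  then obtain m where "depth (Inr u) = Suc m" by (cases "depth (Inr u)") auto
  then obtain z where "adj_S E T z (Inr u)"
    using gdist_Suc_obtains_predecessor[OF conn_within_depth[OF u]] by metis
  then show "u \<in> T" by (auto simp: adj_S_Inr_iff)
qed

text \<open>Odd vertices keep their full degree k + 1 in the ball.\<close>
lemma ball_V_if_adjacent: "u \<in> ball_U \<Longrightarrow> E v u \<Longrightarrow> v \<in> ball_V"
proof -
  assume "u \<in> ball_U" "E v u"
  then have "Inr u \<in> odd_vertices BT (adj_S E T) (Inl o0)" by (simp add: odd_vertices_eq)
  then have "card {y \<in> BT. adj_S E T (Inr u) y} = k + 1"
    using valid by (simp add: valid_tree_def degree_in_def)
  moreover have "card (Inl ` {v. E v u} :: ('v + 'u) set) = k + 1"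
    using degree_U by (simp add: card_image)
  moreover have "y \<in> Inl ` {v. E v u}" if "adj_S E T (Inr u) y" for y
    using that adj_S_sym[of E T "Inr u" y] adj_S_Inr_iff[of E T y u] by auto
  then have "{y \<in> BT. adj_S E T (Inr u) y} \<subseteq> Inl ` {v. E v u}" by blast
  ultimately have "{y \<in> BT. adj_S E T (Inr u) y} = Inl ` {v. E v u}"
    by (intro card_subset_eq) auto
  then show "v \<in> ball_V" using \<open>E v u\<close> by (auto simp: ball_V_def)
qed

lemma adj_S_if_ball_U: "u \<in> ball_U \<Longrightarrow> E v u \<Longrightarrow> adj_S E T (Inl v) (Inr u)"
  using ball_U_subset by auto

lemma predecessor_unique:
  assumes "x \<in> BT" "y1 \<in> BT" "y2 \<in> BT"
    and "adj_S E T x y1" "adj_S E T x y2" "depth x = Suc (depth y1)" "depth x = Suc (depth y2)"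
  shows "y1 = y2"
proof (rule ccontr)
  assume "y1 \<noteq> y2"
  then have "has_cycle BT (adj_S E T)"
    using has_cycle_if_two_predecessors[OF adj_S_sym conn_within_depth[OF assms(2)]
        conn_within_depth[OF assms(3)] _ refl _ conn_within_depth[OF assms(1)]] assms(4-7)
    by simp
  then show False using valid by (simp add: valid_tree_def is_tree_def)
qed

text \<open>In a tree every odd vertex has a unique parent, so all but one of its k + 1 \<ge> 2
  neighbours are children.\<close>
lemma ex_child: "u \<in> ball_U \<Longrightarrow> \<exists>v. E v u \<and> depth (Inl v) = Suc (depth (Inr u))"
proof (rule ccontr)
  assume u: "u \<in> ball_U" and no_child: "\<nexists>v. E v u \<and> depth (Inl v) = Suc (depth (Inr u))"
  have u_ball: "Inr u \<in> BT" using u by (simp add: ball_U_def)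
  have parent: "depth (Inr u) = Suc (depth (Inl v))" if "E v u" for v
  proof -
    have v_ball: "Inl v \<in> BT" using ball_V_if_adjacent[OF u that] by (simp add: ball_V_def)
    have "adj_S E T (Inl v) (Inr u)" using adj_S_if_ball_U[OF u that] .
    then have "depth (Inl v) \<le> Suc (depth (Inr u))" "depth (Inr u) \<le> Suc (depth (Inl v))"
      using depth_adjacent_le[OF u_ball v_ball] depth_adjacent_le[OF v_ball u_ball] adj_S_sym
      by blast+
    moreover have "depth (Inl v) \<noteq> depth (Inr u)"
      using isl_iff_even_depth[OF v_ball] isl_iff_even_depth[OF u_ball] by auto
    moreover have "depth (Inl v) \<noteq> Suc (depth (Inr u))" using no_child that by blast
    ultimately show ?thesis by linarith
  qed
  have "\<not> card {v. E v u} \<le> Suc 0" using degree_U k_pos by simp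
  then obtain v1 v2 where v: "E v1 u" "E v2 u" "v1 \<noteq> v2"
    by (auto simp: card_le_Suc0_iff_eq)
  have "Inl v1 \<in> BT" "Inl v2 \<in> BT"
    using ball_V_if_adjacent[OF u] v by (auto simp: ball_V_def)
  moreover have "adj_S E T (Inr u) (Inl v1)" "adj_S E T (Inr u) (Inl v2)"
    using adj_S_if_ball_U[OF u] v adj_S_sym by metis+
  ultimately show False
    using predecessor_unique[OF u_ball _ _ _ _ parent[OF v(1)] parent[OF v(2)]] v(3) by blast
qed

lemma card_ball_U_less: "card ball_U < card ball_V"
proof -
  obtain child where child: "\<And>u. u \<in> ball_U \<Longrightarrow> E (child u) u \<and>
      depth (Inl (child u)) = Suc (depth (Inr u))"
    using ex_child by metis
  have child_ball: "Inl (child u) \<in> BT" if "u \<in> ball_U" for u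
    using ball_V_if_adjacent[OF that] child[OF that] by (simp add: ball_V_def)
  have inj: "inj_on child ball_U"
  proof (rule inj_onI)
    fix u1 u2 assume u: "u1 \<in> ball_U" "u2 \<in> ball_U" "child u1 = child u2"
    have "adj_S E T (Inl (child u1)) (Inr u1)" "adj_S E T (Inl (child u1)) (Inr u2)"
      using adj_S_if_ball_U child u by metis+
    moreover have "depth (Inl (child u1)) = Suc (depth (Inr u1))"
      "depth (Inl (child u1)) = Suc (depth (Inr u2))"
      using child u by metis+
    ultimately show "u1 = u2"
      using predecessor_unique[OF child_ball[OF u(1)], of "Inr u1" "Inr u2"] u(1,2)
      by (simp add: ball_U_def)
  qed
  have "child ` ball_U \<subseteq> ball_V - {o0}"
    using child child_ball gdist_eq_0_iff[OF conn_within_depth[OF root_in_ball_vertices]]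
    by (fastforce simp: ball_V_def)
  then have "card ball_U \<le> card (ball_V - {o0})"
    using card_inj_on_le[OF inj _ finite] by blast
  moreover have "o0 \<in> ball_V" by (simp add: ball_V_def root_in_ball_vertices)
  ultimately show ?thesis
    by (metis card_Diff1_less finite le_less_trans)
qed

lemma depth_le_tree_height: "x \<in> BT \<Longrightarrow> depth x \<le> tree_height BT (adj_S E T) (Inl o0)"
  unfolding tree_height_def by (simp add: Max_ge)

lemma tree_height_le: "tree_height BT (adj_S E T) (Inl o0) \<le> r"
  unfolding tree_height_def using root_in_ball_vertices[of o0 E T r] gdist_ball_vertices_le
  by (intro Max.boundedI) auto

lemma ball_U_if_adjacent:
  "v \<in> ball_V \<Longrightarrow> depth (Inl v) < r \<Longrightarrow> u \<in> T \<Longrightarrow> E v u \<Longrightarrow> u \<in> ball_U"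
  using ball_vertices_adjacent[of "Inl v" E T o0 r "Inr u"] by (simp add: ball_V_def ball_U_def)

lemma m_count_pos_if_transversal:
  assumes "K \<subseteq> Inl ` R" "R \<subseteq> ball_V" "bij_betw \<sigma> R ball_U" "\<And>v. v \<in> R \<Longrightarrow> E v (\<sigma> v)"
  shows "m_count K BT (adj_S E T) (Inl o0) > 0"
proof -
  define M where "M = (\<lambda>v. {Inl v, Inr (\<sigma> v)}) ` R"
  have edges: "M \<subseteq> graph_edges BT (adj_S E T)"
  proof
    fix e assume "e \<in> M"
    then obtain v where v: "v \<in> R" "e = {Inl v, Inr (\<sigma> v)}" by (auto simp: M_def)
    have "\<sigma> v \<in> ball_U" using assms(3) v(1) by (auto simp: bij_betw_def)
    then show "e \<in> graph_edges BT (adj_S E T)"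
      using v assms(2,4) adj_S_if_ball_U unfolding graph_edges_def
      by (fastforce simp: ball_V_def ball_U_def)
  qed
  have disjoint: "e1 \<inter> e2 = {}" if "e1 \<in> M" "e2 \<in> M" "e1 \<noteq> e2" for e1 e2
    using that assms(3) by (auto simp: M_def bij_betw_def inj_on_def)
  have saturating: "\<exists>e\<in>M. x \<in> e" if x: "x \<in> K \<union> odd_vertices BT (adj_S E T) (Inl o0)" for x
  proof -
    consider v where "v \<in> R" "x = Inl v" | u where "u \<in> ball_U" "x = Inr u"
      using x assms(1) unfolding odd_vertices_eq by blast
    then show ?thesis
    proof cases
      case 1
      then show ?thesis by (auto simp: M_def)
    next
      case (2 u)
      then obtain v where "v \<in> R" "u = \<sigma> v" using assms(3) by (auto simp: bij_betw_def)
      with 2 show ?thesis by (auto simp: M_def)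
    qed
  qed
  have "is_matching BT (adj_S E T) M"
    unfolding is_matching_def using edges disjoint by blast
  then have "M \<in> {M. is_matching BT (adj_S E T) M \<and>
      (\<forall>x\<in>K \<union> odd_vertices BT (adj_S E T) (Inl o0). \<exists>e\<in>M. x \<in> e)}"
    using saturating by blast
  then show ?thesis unfolding m_count_def card_gt_0_iff by (intro conjI finite) blast
qed

end

section \<open>Linear algebra on the ball\<close>

locale signed_ball_tree = ball_tree k r E T o0
  for k r and E :: "'v::finite \<Rightarrow> 'u::finite \<Rightarrow> bool" and T o0 +
  fixes d :: nat and B :: "real^'u^'v"
  assumes C4: "C4_free E" and degree_V: "\<And>v. card {u. E v u} = d"
    and signed: "signed_adjacency E B" and det_pos: "det_measure B T > 0"
    and small: "card (even_vertices (ball_vertices E T o0 r) (adj_S E T) (Inl o0)) < d"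
begin

definition "inner_V = {v \<in> ball_V. \<forall>u\<in>T. E v u \<longrightarrow> u \<in> ball_U}"

abbreviation "row_U v \<equiv> restrict_vec ball_U (row v B)"

lemma card_ball_V_less: "card ball_V < d"
  using small by (simp add: even_vertices_eq card_image)

lemma independent_family_inner_rows: "independent_family row_U inner_V"
proof (rule independent_family_restricted_rows[OF det_pos ball_U_subset])
  have "card inner_V < d"
    using card_ball_V_less card_mono[of ball_V inner_V] by (auto simp: inner_V_def)
  then show "independent_family (\<lambda>v. row v B) inner_V"
    by (rule independent_family_rows_if_C4_free[OF C4 degree_V signed])
  show "B$v$u = 0" if "v \<in> inner_V" "u \<in> T - ball_U" for v u
    using that signed_adjacency_nonzero_iff[OF signed] by (auto simp: inner_V_def)
qed

lemma dim_ball_rows: "dim (row_U ` ball_V) = card ball_U"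
proof (rule dim_restricted_rows)
  show "independent_family (\<lambda>u. column u B) ball_U"
    using independent_family_subset[OF finite det_measure_pos_independent_columns[OF det_pos]]
      ball_U_subset by blast
  show "v \<in> ball_V" if "u \<in> ball_U" "B$v$u \<noteq> 0" for v u
    using that ball_V_if_adjacent signed_adjacency_nonzero_iff[OF signed] by blast
qed

lemma tree_height_eq: "tree_height BT (adj_S E T) (Inl o0) = r"
proof (rule ccontr)
  assume "tree_height BT (adj_S E T) (Inl o0) \<noteq> r"
  then have "depth x < r" if "x \<in> BT" for x
    using tree_height_le depth_le_tree_height[OF that] by linarith
  then have "inner_V = ball_V"
    using ball_U_if_adjacent by (auto simp: inner_V_def ball_V_def)
  then have "card ball_V = card ball_U"
    using independent_family_inner_rows dim_ball_rows
    by (simp add: independent_family_dim_eq_card)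
  then show False using card_ball_U_less by simp
qed

lemma I_set_subset: "I_set BT (adj_S E T) (Inl o0) \<subseteq> Inl ` inner_V"
proof
  fix x assume x: "x \<in> I_set BT (adj_S E T) (Inl o0)"
  then obtain v where "x = Inl v" "v \<in> ball_V"
    by (auto simp: I_set_def even_vertices_eq)
  moreover have "depth x < r" using x tree_height_eq by (simp add: I_set_def)
  ultimately show "x \<in> Inl ` inner_V"
    using ball_U_if_adjacent by (auto simp: inner_V_def)
qed

lemma m_count_pos: "m_count (I_set BT (adj_S E T) (Inl o0)) BT (adj_S E T) (Inl o0) > 0"
proof -
  have inner_V_subset: "inner_V \<subseteq> ball_V" by (auto simp: inner_V_def)
  have row_U_support: "row_U v $ u = 0" if "v \<in> ball_V" "u \<notin> ball_U" for v u
    using that by (simp add: restrict_vec_def)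
  obtain R \<sigma> where R: "inner_V \<subseteq> R" "R \<subseteq> ball_V" "bij_betw \<sigma> R ball_U"
      and nonzero: "\<And>v. v \<in> R \<Longrightarrow> row_U v $ \<sigma> v \<noteq> 0"
    using independent_family_obtains_transversal[OF finite inner_V_subset
        independent_family_inner_rows dim_ball_rows row_U_support] by blast
  have "E v (\<sigma> v)" if "v \<in> R" for v
    using nonzero[OF that] signed_adjacency_nonzero_iff[OF signed]
    by (auto simp: restrict_vec_def row_def split: if_splits)
  then show ?thesis
    using m_count_pos_if_transversal[OF _ R(2,3)] I_set_subset R(1) by blast
qed

end

theorem lemma2p9:
  fixes k d r :: nat
    and E :: "'v::finite \<Rightarrow> 'u::finite \<Rightarrow> bool"
    and B :: "real^'u^'v"
    and T :: "'u set"
    and o0 :: 'v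
  assumes "k \<ge> 1" and "d > 0"
    and "C4_free E" and "biregular d (k + 1) E"
    and "signed_adjacency E B"
    and "even r"
    and "det_measure B T > 0"
    and "valid_tree k (ball_vertices E T o0 r) (adj_S E T) (Inl o0)"
    and "card (even_vertices (ball_vertices E T o0 r) (adj_S E T) (Inl o0)) < d"
  shows "tree_height (ball_vertices E T o0 r) (adj_S E T) (Inl o0) = r
    \<and> m_count (I_set (ball_vertices E T o0 r) (adj_S E T) (Inl o0))
              (ball_vertices E T o0 r) (adj_S E T) (Inl o0) > 0"
proof -
  interpret signed_ball_tree k r E T o0 d B
    using assms by unfold_locales (auto simp: biregular_def)
  show ?thesis using tree_height_eq m_count_pos by blast
qed

end
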